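(* Let $a>b>0$ and let $E$ be the ellipse $\frac{x^2}{a^2}+\frac{y^2}{b^2}=1$. For a 3-periodic billiard orbit $T$ in $E$, consider the Cosine Circle of the excentral triangle of $T$. Then this circle is the same for all 3-periodic orbits in $E$: its radius $r^*$ is constant, it is centered at the center $(0,0)$ of $E$, and it lies exterior to $E$ (i.e. $r^*>a$).
   Context: A 3-periodic billiard orbit in the ellipse $E$ is a nondegenerate triangle $P_1P_2P_3$ with all vertices on $E$ such that at each vertex $P_i$ the normal line to $E$ at $P_i$ bisects the interior angle of the triangle at $P_i$. The excentral triangle of $T$ has vertices at the three excenters of $T$. The Cosine Circle (second Lemoine circle) of a triangle $\Delta$ is the circle centered at the symmedian point $X_6$ of $\Delta$ passing through the six points where the three lines through $X_6$ parallel to the sides of the orthic triangle of $\Delta$ (the triangle of altitude feet) meet the sides of $\Delta$. *)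

theory Defs
  imports "HOL-Analysis.Analysis"
begin

type_synonym pt = "real \<times> real"

definition cross2 :: "pt \<Rightarrow> pt \<Rightarrow> real" where
  "cross2 u v = fst u * snd v - snd u * fst v"

definition on_ellipse :: "real \<Rightarrow> real \<Rightarrow> pt \<Rightarrow> bool" where
  "on_ellipse a b P \<longleftrightarrow> (fst P)^2 / a^2 + (snd P)^2 / b^2 = 1"

definition ellipse_normal :: "real \<Rightarrow> real \<Rightarrow> pt \<Rightarrow> pt" where
  "ellipse_normal a b P = (fst P / a^2, snd P / b^2)"

definition int_bisector_dir :: "pt \<Rightarrow> pt \<Rightarrow> pt \<Rightarrow> pt" where
  "int_bisector_dir P Q R = (Q - P) /\<^sub>R norm (Q - P) + (R - P) /\<^sub>R norm (R - P)"

definition normal_bisects :: "real \<Rightarrow> real \<Rightarrow> pt \<Rightarrow> pt \<Rightarrow> pt \<Rightarrow> bool" where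
  "normal_bisects a b P Q R \<longleftrightarrow> cross2 (int_bisector_dir P Q R) (ellipse_normal a b P) = 0"

definition billiard3 :: "real \<Rightarrow> real \<Rightarrow> pt \<Rightarrow> pt \<Rightarrow> pt \<Rightarrow> bool" where
  "billiard3 a b P1 P2 P3 \<longleftrightarrow>
     \<not> collinear {P1, P2, P3} \<and>
     on_ellipse a b P1 \<and> on_ellipse a b P2 \<and> on_ellipse a b P3 \<and>
     normal_bisects a b P1 P2 P3 \<and> normal_bisects a b P2 P3 P1 \<and> normal_bisects a b P3 P1 P2"

text \<open>Excenter opposite vertex A of triangle ABC: barycentrics (-a : b : c).\<close>
definition excenter :: "pt \<Rightarrow> pt \<Rightarrow> pt \<Rightarrow> pt" where
  "excenter A B C =
     (let la = dist B C; lb = dist C A; lc = dist A B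
      in (1 / (- la + lb + lc)) *\<^sub>R ((- la) *\<^sub>R A + lb *\<^sub>R B + lc *\<^sub>R C))"

definition excentral :: "pt \<Rightarrow> pt \<Rightarrow> pt \<Rightarrow> pt \<times> pt \<times> pt" where
  "excentral A B C = (excenter A B C, excenter B C A, excenter C A B)"

definition symmedian :: "pt \<Rightarrow> pt \<Rightarrow> pt \<Rightarrow> pt" where
  "symmedian A B C =
     (let la = dist B C; lb = dist C A; lc = dist A B
      in (1 / (la^2 + lb^2 + lc^2)) *\<^sub>R (la^2 *\<^sub>R A + lb^2 *\<^sub>R B + lc^2 *\<^sub>R C))"

definition foot :: "pt \<Rightarrow> pt \<Rightarrow> pt \<Rightarrow> pt" where
  "foot P U V = U + (((P - U) \<bullet> (V - U)) / ((V - U) \<bullet> (V - U))) *\<^sub>R (V - U)"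

definition orthic :: "pt \<Rightarrow> pt \<Rightarrow> pt \<Rightarrow> pt \<times> pt \<times> pt" where
  "orthic A B C = (foot A B C, foot B C A, foot C A B)"

definition cosine_circle_points :: "pt \<Rightarrow> pt \<Rightarrow> pt \<Rightarrow> pt set" where
  "cosine_circle_points A B C =
     (let K = symmedian A B C;
          (Ha, Hb, Hc) = orthic A B C;
          dirs = {Hc - Hb, Ha - Hc, Hb - Ha};
          sides = closed_segment A B \<union> closed_segment B C \<union> closed_segment C A
      in {X \<in> sides. \<exists>d\<in>dirs. \<exists>t::real. X = K + t *\<^sub>R d})"

end

theory Submission
  imports Defs
begin

(* At each vertex of the orbit the normal bisects the interior angle, so the tangent is the exterior
   bisector and carries the two excenters not opposite that vertex. Hence the sides of the excentral
   triangle are the tangents at the vertices, its orthic triangle is the orbit itself, and each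
   excenter is the pole of the opposite chord, so it lies on the diameter through the midpoint of
   that chord. The symmedian point of the excentral triangle is the Mittenpunkt of the orbit, which
   lies on these three diameters; so it is the centre.

   The bisector condition also says that J = (1 - <n(P), Q>) / |PQ|, with n(P) the normal at P scaled
   so that <n(P), P> = 1, is the same for the three sides. Writing the vertices as images
   (a Re z, b Im z) of unit complex numbers, the three z become roots of one symmetric biquadratic,
   and the relation between its coefficients determines J from a and b alone. The line through the
   centre parallel to P1P2 meets the tangent at P1 at distance 1/J from the centre, inside the side
   of the excentral triangle, while the parallel to P2P3 meets that tangent outside the side. *)

section \<open>Plane vectors\<close>

lemma cross2_Pair [simp]: "cross2 (x1, y1) (x2, y2) = x1 * y2 - y1 * x2"
  by (simp add: cross2_def)

lemma cross2_add_right: "cross2 P (x + y) = cross2 P x + cross2 P y"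
  and cross2_diff_right: "cross2 P (x - y) = cross2 P x - cross2 P y"
  and cross2_scaleR_right: "cross2 P (c *\<^sub>R x) = c * cross2 P x"
  and cross2_scaleR_left: "cross2 (c *\<^sub>R x) P = c * cross2 x P"
  and cross2_minus_right: "cross2 P (- x) = - cross2 P x"
  and cross2_self: "cross2 x x = 0"
  by (simp_all add: cross2_def algebra_simps)

lemma cross2_diff_diff: "cross2 (B - A) (C - A) = cross2 A B + cross2 B C + cross2 C A"
  by (simp add: cross2_def algebra_simps)

lemma cross2_scaleR_sum_eq_0: "cross2 B C *\<^sub>R A + cross2 C A *\<^sub>R B + cross2 A B *\<^sub>R C = 0"
  by (simp add: cross2_def prod_eq_iff algebra_simps)

lemma inner_cross2_decomposition:
  "(d \<bullet> d) *\<^sub>R y = (d \<bullet> y) *\<^sub>R d + cross2 d y *\<^sub>R (- snd d, fst d)"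
  by (cases d, cases y) (simp add: algebra_simps)

lemma cross2_lagrange: "(d \<bullet> d) * cross2 y z = (d \<bullet> y) * cross2 d z - (d \<bullet> z) * cross2 d y"
  by (cases d, cases y, cases z) (simp add: algebra_simps)

lemma inner_lagrange: "(d \<bullet> d) * (y \<bullet> z) = (d \<bullet> y) * (d \<bullet> z) + cross2 d y * cross2 d z"
  by (cases d, cases y, cases z) (simp add: algebra_simps)

lemma collinear_if_cross2_eq_0:
  fixes A B C :: pt
  assumes "cross2 (B - A) (C - A) = 0"
  shows "collinear {A, B, C}"
proof (cases "B = A")
  case False
  let ?d = "B - A"
  have "C - A = (1 / (?d \<bullet> ?d)) *\<^sub>R ((?d \<bullet> ?d) *\<^sub>R (C - A))"
    using False by simp
  also have "\<dots> = ((?d \<bullet> (C - A)) / (?d \<bullet> ?d)) *\<^sub>R ?d"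
    using inner_cross2_decomposition[of ?d "C - A"] assms by (simp add: zero_prod_def[symmetric])
  finally have "C - A = ((?d \<bullet> (C - A)) / (?d \<bullet> ?d)) *\<^sub>R ?d" .
  then have "collinear {0, B - A, C - A}"
    unfolding collinear_lemma by (auto simp: algebra_simps)
  then have "collinear {B, A, C}"
    by (simp add: collinear_3)
  then show ?thesis
    by (metis insert_commute)
qed simp

lemma dist_less_if_not_collinear:
  fixes A B C :: pt
  assumes "\<not> collinear {A, B, C}"
  shows "dist B C < dist B A + dist A C"
proof -
  have "dist B C \<noteq> dist B A + dist A C"
  proof
    assume "dist B C = dist B A + dist A C"
    then have "collinear {B, A, C}"
      using between between_imp_collinear by blast
    with assms show False
      by (simp add: insert_commute)
  qed
  then show ?thesis
    using dist_triangle[of B C A] by linarith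
qed

lemma mem_closed_segment_real_iff: "(x::real) \<in> closed_segment p q \<longleftrightarrow> (x - p) * (x - q) \<le> 0"
  by (auto simp: closed_segment_eq_real_ivl mult_le_0_iff)

lemma foot_eqI:
  assumes "P - U = s *\<^sub>R (V - U)" and "(Y - P) \<bullet> (V - U) = 0" and "U \<noteq> V"
  shows "foot Y U V = P"
proof -
  have "(Y - U) \<bullet> (V - U) = (Y - P) \<bullet> (V - U) + (P - U) \<bullet> (V - U)"
    by (simp add: inner_diff_left)
  also have "\<dots> = s * ((V - U) \<bullet> (V - U))"
    using assms(1,2) by simp
  finally have "(Y - U) \<bullet> (V - U) = s * ((V - U) \<bullet> (V - U))" .
  then have "foot Y U V = U + s *\<^sub>R (V - U)"
    using assms(3) by (simp add: foot_def)
  also have "\<dots> = U + (P - U)"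
    unfolding assms(1) ..
  finally show ?thesis
    by simp
qed

section \<open>The excentral triangle\<close>

lemma excenter_scaled:
  assumes "- dist B C + dist C A + dist A B \<noteq> 0"
  shows "(- dist B C + dist C A + dist A B) *\<^sub>R excenter A B C =
    (- dist B C) *\<^sub>R A + dist C A *\<^sub>R B + dist A B *\<^sub>R C"
  using assms by (simp add: excenter_def Let_def)

lemma excenter_denominators_pos:
  fixes A B C :: pt
  defines "la \<equiv> dist B C" and "lb \<equiv> dist C A" and "lc \<equiv> dist A B"
  assumes "\<not> collinear {A, B, C}"
  shows "- la + lb + lc > 0" and "la - lb + lc > 0" and "la + lb - lc > 0"
proof -
  have "\<not> collinear {B, C, A}" "\<not> collinear {C, A, B}"
    using assms(4) by (simp_all add: insert_commute)
  then have "dist B C < dist B A + dist A C" "dist C A < dist C B + dist B A"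
    "dist A B < dist A C + dist C B"
    using assms(4) dist_less_if_not_collinear by blast+
  then show "- la + lb + lc > 0" "la - lb + lc > 0" "la + lb - lc > 0"
    unfolding la_def lb_def lc_def by (simp_all add: dist_commute)
qed

lemma excentral_scaled:
  fixes A B C :: pt
  defines "la \<equiv> dist B C" and "lb \<equiv> dist C A" and "lc \<equiv> dist A B"
  assumes "\<not> collinear {A, B, C}"
  shows "(- la + lb + lc) *\<^sub>R excenter A B C = (- la) *\<^sub>R A + lb *\<^sub>R B + lc *\<^sub>R C"
    and "(la - lb + lc) *\<^sub>R excenter B C A = la *\<^sub>R A - lb *\<^sub>R B + lc *\<^sub>R C"
    and "(la + lb - lc) *\<^sub>R excenter C A B = la *\<^sub>R A + lb *\<^sub>R B - lc *\<^sub>R C"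
proof -
  note pos = excenter_denominators_pos[OF assms(4), folded la_def lb_def lc_def]
  show "(- la + lb + lc) *\<^sub>R excenter A B C = (- la) *\<^sub>R A + lb *\<^sub>R B + lc *\<^sub>R C"
    using excenter_scaled[where A = A and B = B and C = C] pos(1) by (simp add: la_def lb_def lc_def)
  have "(- lb + lc + la) *\<^sub>R excenter B C A = (- lb) *\<^sub>R B + lc *\<^sub>R C + la *\<^sub>R A"
    using excenter_scaled[where A = B and B = C and C = A] pos(2) by (simp add: la_def lb_def lc_def)
  then show "(la - lb + lc) *\<^sub>R excenter B C A = la *\<^sub>R A - lb *\<^sub>R B + lc *\<^sub>R C"
    by (simp add: algebra_simps)
  have "(- lc + la + lb) *\<^sub>R excenter C A B = (- lc) *\<^sub>R C + la *\<^sub>R A + lb *\<^sub>R B"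
    using excenter_scaled[where A = C and B = A and C = B] pos(3) by (simp add: la_def lb_def lc_def)
  then show "(la + lb - lc) *\<^sub>R excenter C A B = la *\<^sub>R A + lb *\<^sub>R B - lc *\<^sub>R C"
    by (simp add: algebra_simps)
qed

lemma excenters_minus_vertex:
  fixes A B C :: pt
  defines "la \<equiv> dist B C" and "lb \<equiv> dist C A" and "lc \<equiv> dist A B"
  assumes "\<not> collinear {A, B, C}"
  shows "excenter A B C - A = (1 / (- la + lb + lc)) *\<^sub>R (lb *\<^sub>R (B - A) + lc *\<^sub>R (C - A))"
    and "excenter B C A - A = (1 / (la - lb + lc)) *\<^sub>R (lc *\<^sub>R (C - A) - lb *\<^sub>R (B - A))"
    and "excenter C A B - A = (1 / (la + lb - lc)) *\<^sub>R (lb *\<^sub>R (B - A) - lc *\<^sub>R (C - A))"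
proof -
  note pos = excenter_denominators_pos[OF assms(4), folded la_def lb_def lc_def]
  note scaled = excentral_scaled[OF assms(4), folded la_def lb_def lc_def]
  have "(- la + lb + lc) *\<^sub>R (excenter A B C - A) = (- la + lb + lc) *\<^sub>R excenter A B C - (- la + lb + lc) *\<^sub>R A"
    by (simp only: scaleR_diff_right)
  also have "\<dots> = lb *\<^sub>R (B - A) + lc *\<^sub>R (C - A)"
    unfolding scaled(1) by (simp add: algebra_simps)
  finally have "(- la + lb + lc) *\<^sub>R (excenter A B C - A) = lb *\<^sub>R (B - A) + lc *\<^sub>R (C - A)" .
  with pos(1) show "excenter A B C - A = (1 / (- la + lb + lc)) *\<^sub>R (lb *\<^sub>R (B - A) + lc *\<^sub>R (C - A))"
    by (simp add: eq_vector_fraction_iff)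
  have "(la - lb + lc) *\<^sub>R (excenter B C A - A) = (la - lb + lc) *\<^sub>R excenter B C A - (la - lb + lc) *\<^sub>R A"
    by (simp only: scaleR_diff_right)
  also have "\<dots> = lc *\<^sub>R (C - A) - lb *\<^sub>R (B - A)"
    unfolding scaled(2) by (simp add: algebra_simps)
  finally have "(la - lb + lc) *\<^sub>R (excenter B C A - A) = lc *\<^sub>R (C - A) - lb *\<^sub>R (B - A)" .
  with pos(2) show "excenter B C A - A = (1 / (la - lb + lc)) *\<^sub>R (lc *\<^sub>R (C - A) - lb *\<^sub>R (B - A))"
    by (simp add: eq_vector_fraction_iff)
  have "(la + lb - lc) *\<^sub>R (excenter C A B - A) = (la + lb - lc) *\<^sub>R excenter C A B - (la + lb - lc) *\<^sub>R A"
    by (simp only: scaleR_diff_right)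
  also have "\<dots> = lb *\<^sub>R (B - A) - lc *\<^sub>R (C - A)"
    unfolding scaled(3) by (simp add: algebra_simps)
  finally have "(la + lb - lc) *\<^sub>R (excenter C A B - A) = lb *\<^sub>R (B - A) - lc *\<^sub>R (C - A)" .
  with pos(3) show "excenter C A B - A = (1 / (la + lb - lc)) *\<^sub>R (lb *\<^sub>R (B - A) - lc *\<^sub>R (C - A))"
    by (simp add: eq_vector_fraction_iff)
qed

lemma excentral_side_vector:
  fixes A B C :: pt
  defines "la \<equiv> dist B C" and "lb \<equiv> dist C A" and "lc \<equiv> dist A B"
  assumes "\<not> collinear {A, B, C}"
  shows "excenter C A B - excenter B C A =
    (2 * la / ((la - lb + lc) * (la + lb - lc))) *\<^sub>R (lb *\<^sub>R (B - A) - lc *\<^sub>R (C - A))"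
proof -
  define v where "v = lb *\<^sub>R (B - A) - lc *\<^sub>R (C - A)"
  note pos = excenter_denominators_pos[OF assms(4), folded la_def lb_def lc_def]
  have neg: "lc *\<^sub>R (C - A) - lb *\<^sub>R (B - A) = - v"
    by (simp add: v_def)
  have "excenter C A B - excenter B C A = (excenter C A B - A) - (excenter B C A - A)"
    by simp
  also have "\<dots> = (1 / (la + lb - lc)) *\<^sub>R v - (1 / (la - lb + lc)) *\<^sub>R (- v)"
    unfolding excenters_minus_vertex(2,3)[OF assms(4), folded la_def lb_def lc_def, folded v_def] neg ..
  also have "\<dots> = (1 / (la + lb - lc) + 1 / (la - lb + lc)) *\<^sub>R v"
    by (simp add: scaleR_add_left)
  also have "1 / (la + lb - lc) + 1 / (la - lb + lc) = 2 * la / ((la - lb + lc) * (la + lb - lc))"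
    using pos by (simp add: field_simps)
  finally show ?thesis
    unfolding v_def .
qed

lemma norm_external_bisector_sq:
  fixes A B C :: pt
  defines "la \<equiv> dist B C" and "lb \<equiv> dist C A" and "lc \<equiv> dist A B"
  shows "(norm (lb *\<^sub>R (B - A) - lc *\<^sub>R (C - A)))^2 = lb * lc * (la - lb + lc) * (la + lb - lc)"
proof -
  have nB: "(B - A) \<bullet> (B - A) = lc^2" and nC: "(C - A) \<bullet> (C - A) = lb^2"
    by (simp_all add: lb_def lc_def dist_norm power2_norm_eq_inner[symmetric] norm_minus_commute)
  have "la^2 = ((C - A) - (B - A)) \<bullet> ((C - A) - (B - A))"
    by (simp add: la_def dist_norm power2_norm_eq_inner[symmetric] norm_minus_commute)
  then have cos: "2 * ((B - A) \<bullet> (C - A)) = lb^2 + lc^2 - la^2"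
    using nB nC by (simp add: inner_diff_left inner_diff_right inner_commute)
  have "(norm (lb *\<^sub>R (B - A) - lc *\<^sub>R (C - A)))^2 =
      (lb *\<^sub>R (B - A) - lc *\<^sub>R (C - A)) \<bullet> (lb *\<^sub>R (B - A) - lc *\<^sub>R (C - A))"
    by (rule power2_norm_eq_inner)
  also have "\<dots> = lb^2 * ((B - A) \<bullet> (B - A)) + lc^2 * ((C - A) \<bullet> (C - A))
      - lb * lc * (2 * ((B - A) \<bullet> (C - A)))"
    by (simp add: inner_diff_left inner_diff_right inner_commute algebra_simps power2_eq_square)
  also have "\<dots> = lb * lc * (la - lb + lc) * (la + lb - lc)"
    unfolding cos nB nC by (simp add: algebra_simps power2_eq_square)
  finally show ?thesis .
qed

lemma foot_excentral:
  fixes A B C :: pt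
  assumes "\<not> collinear {A, B, C}"
  shows "foot (excenter A B C) (excenter B C A) (excenter C A B) = A"
proof -
  define la lb lc where "la = dist B C" and "lb = dist C A" and "lc = dist A B"
  define dA dB dC where "dA = - la + lb + lc" and "dB = la - lb + lc" and "dC = la + lb - lc"
  define v w where "v = lb *\<^sub>R (B - A) - lc *\<^sub>R (C - A)" and "w = lb *\<^sub>R (B - A) + lc *\<^sub>R (C - A)"
  have pos: "dA > 0" "dB > 0" "dC > 0"
    using excenter_denominators_pos[OF assms] by (simp_all add: dA_def dB_def dC_def la_def lb_def lc_def)
  note E = excenters_minus_vertex[OF assms, folded la_def lb_def lc_def, folded dA_def dB_def dC_def v_def w_def]
  have side: "excenter C A B - excenter B C A = (2 * la / (dB * dC)) *\<^sub>R v"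
    using excentral_side_vector[OF assms] by (simp add: la_def lb_def lc_def dB_def dC_def v_def)
  have "lc > 0"
    using assms by (auto simp: lc_def)
  moreover have "cross2 (B - A) (C - A) \<noteq> 0"
    using assms collinear_if_cross2_eq_0 by blast
  ultimately have "cross2 (B - A) v \<noteq> 0"
    by (simp add: v_def cross2_diff_right cross2_scaleR_right cross2_self)
  then have "v \<noteq> 0"
    by (auto simp: cross2_def)
  moreover have "la > 0"
    using assms by (auto simp: la_def)
  ultimately have ne: "excenter B C A \<noteq> excenter C A B"
    using side pos by auto
  have "w \<bullet> v = lb^2 * ((B - A) \<bullet> (B - A)) - lc^2 * ((C - A) \<bullet> (C - A))"
    by (simp add: v_def w_def inner_add_left inner_diff_right inner_commute algebra_simps power2_eq_square)
  also have "\<dots> = 0"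
    by (simp add: lb_def lc_def dist_norm power2_norm_eq_inner[symmetric] norm_minus_commute)
  finally have "w \<bullet> v = 0" .
  then have orth: "(excenter A B C - A) \<bullet> (excenter C A B - excenter B C A) = 0"
    unfolding E(1) side by simp
  have "A - excenter B C A = - (excenter B C A - A)"
    by simp
  also have "\<dots> = (1 / dB) *\<^sub>R v"
    unfolding E(2) v_def by (simp only: scaleR_minus_right[symmetric] minus_diff_eq)
  also have "\<dots> = ((1 / dB) / (2 * la / (dB * dC))) *\<^sub>R (excenter C A B - excenter B C A)"
    using pos \<open>la > 0\<close> unfolding side by simp
  finally have "A - excenter B C A = ((1 / dB) / (2 * la / (dB * dC))) *\<^sub>R (excenter C A B - excenter B C A)" .
  then show ?thesis
    using foot_eqI orth ne by blast
qed

lemma orthic_excentral: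
  fixes A B C :: pt
  assumes "\<not> collinear {A, B, C}"
  shows "orthic (excenter A B C) (excenter B C A) (excenter C A B) = (A, B, C)"
proof -
  have "\<not> collinear {B, C, A}" "\<not> collinear {C, A, B}"
    using assms by (simp_all add: insert_commute)
  then show ?thesis
    using assms by (simp add: orthic_def foot_excentral)
qed

lemma dist_excenters_sq:
  fixes A B C :: pt
  defines "la \<equiv> dist B C" and "lb \<equiv> dist C A" and "lc \<equiv> dist A B"
  assumes "\<not> collinear {A, B, C}"
  shows "(dist (excenter B C A) (excenter C A B))^2 =
    4 * la^2 * lb * lc / ((la - lb + lc) * (la + lb - lc))"
proof -
  define dB dC where "dB = la - lb + lc" and "dC = la + lb - lc"
  have pos: "dB > 0" "dC > 0"
    using excenter_denominators_pos[OF assms(4)] by (simp_all add: dB_def dC_def la_def lb_def lc_def)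
  have "dist (excenter B C A) (excenter C A B) = norm (excenter C A B - excenter B C A)"
    by (simp add: dist_norm norm_minus_commute)
  also have "\<dots> = \<bar>2 * la / (dB * dC)\<bar> * norm (lb *\<^sub>R (B - A) - lc *\<^sub>R (C - A))"
    unfolding excentral_side_vector[OF assms(4), folded la_def lb_def lc_def, folded dB_def dC_def]
    by simp
  finally have "(dist (excenter B C A) (excenter C A B))^2 =
      (2 * la / (dB * dC))^2 * (norm (lb *\<^sub>R (B - A) - lc *\<^sub>R (C - A)))^2"
    by (simp only: power_mult_distrib power2_abs)
  also have "\<dots> = 4 * la^2 * lb * lc / (dB * dC)"
    unfolding norm_external_bisector_sq[where A = A and B = B and C = C, folded la_def lb_def lc_def, folded dB_def dC_def]
    using pos by (simp add: field_simps power2_eq_square)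
  finally show ?thesis
    unfolding dB_def dC_def .
qed

definition mittenpunkt :: "pt \<Rightarrow> pt \<Rightarrow> pt \<Rightarrow> pt" where
  "mittenpunkt A B C =
     (let la = dist B C; lb = dist C A; lc = dist A B;
          wa = la * (- la + lb + lc); wb = lb * (la - lb + lc); wc = lc * (la + lb - lc)
      in (1 / (wa + wb + wc)) *\<^sub>R (wa *\<^sub>R A + wb *\<^sub>R B + wc *\<^sub>R C))"

lemma symmedian_excentral:
  fixes A B C :: pt
  assumes "\<not> collinear {A, B, C}"
  shows "symmedian (excenter A B C) (excenter B C A) (excenter C A B) = mittenpunkt A B C"
proof -
  define la lb lc where "la = dist B C" and "lb = dist C A" and "lc = dist A B"
  define dA dB dC where "dA = - la + lb + lc" and "dB = la - lb + lc" and "dC = la + lb - lc"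
  define F where "F = 4 * la * lb * lc / (dA * dB * dC)"
  have BCA: "\<not> collinear {B, C, A}" and CAB: "\<not> collinear {C, A, B}"
    using assms by (simp_all add: insert_commute)
  have pos: "dA > 0" "dB > 0" "dC > 0"
    using excenter_denominators_pos[OF assms] by (simp_all add: dA_def dB_def dC_def la_def lb_def lc_def)
  have "la > 0" "lb > 0" "lc > 0"
    using assms BCA CAB by (auto simp: la_def lb_def lc_def)
  then have "F \<noteq> 0"
    using pos by (simp add: F_def)
  note IA = excentral_scaled(1)[OF assms, folded la_def lb_def lc_def, folded dA_def]
    and IB = excentral_scaled(2)[OF assms, folded la_def lb_def lc_def, folded dB_def]
    and IC = excentral_scaled(3)[OF assms, folded la_def lb_def lc_def, folded dC_def]
  have "lb - lc + la = dC" "lb + lc - la = dA" "lc - la + lb = dA" "lc + la - lb = dB"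
    by (simp_all add: dA_def dB_def dC_def)
  note sides = dist_excenters_sq[OF assms, folded la_def lb_def lc_def, folded dB_def dC_def]
    dist_excenters_sq[OF BCA, folded la_def lb_def lc_def, unfolded this]
    dist_excenters_sq[OF CAB, folded la_def lb_def lc_def, unfolded this]
  have sA: "(dist (excenter B C A) (excenter C A B))^2 = F * la * dA"
    and sB: "(dist (excenter C A B) (excenter A B C))^2 = F * lb * dB"
    and sC: "(dist (excenter A B C) (excenter B C A))^2 = F * lc * dC"
    unfolding sides F_def using pos by (simp_all add: field_simps power2_eq_square)
  have "(F * la * dA) *\<^sub>R excenter A B C + (F * lb * dB) *\<^sub>R excenter B C A + (F * lc * dC) *\<^sub>R excenter C A B
      = F *\<^sub>R (la *\<^sub>R (dA *\<^sub>R excenter A B C) + lb *\<^sub>R (dB *\<^sub>R excenter B C A) + lc *\<^sub>R (dC *\<^sub>R excenter C A B))"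
    by (simp add: scaleR_add_right mult.commute mult.left_commute)
  also have "\<dots> = F *\<^sub>R ((la * dA) *\<^sub>R A + (lb * dB) *\<^sub>R B + (lc * dC) *\<^sub>R C)"
    unfolding IA IB IC by (simp add: dA_def dB_def dC_def algebra_simps)
  finally show ?thesis
    using \<open>F \<noteq> 0\<close>
    unfolding symmedian_def mittenpunkt_def Let_def sA sB sC
    by (simp add: la_def lb_def lc_def dA_def dB_def dC_def distrib_left[symmetric] mult.assoc)
qed

lemma cross2_midpoint_excenter_eq_0D:
  fixes A B C :: pt
  assumes "\<not> collinear {A, B, C}" and "cross2 (B + C) (excenter A B C) = 0"
  shows "dist B C * (cross2 A B - cross2 C A) + (dist A B - dist C A) * cross2 B C = 0"
proof -
  have "cross2 (B + C) ((- dist B C) *\<^sub>R A + dist C A *\<^sub>R B + dist A B *\<^sub>R C)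
      = (- dist B C + dist C A + dist A B) * cross2 (B + C) (excenter A B C)"
    using excentral_scaled(1)[OF assms(1)] by (simp flip: cross2_scaleR_right)
  also have "\<dots> = 0"
    using assms(2) by simp
  finally show ?thesis
    by (simp add: cross2_def algebra_simps)
qed

lemma mittenpunkt_eq_0I:
  fixes A B C :: pt
  assumes "\<not> collinear {A, B, C}"
    and "cross2 (B + C) (excenter A B C) = 0"
    and "cross2 (C + A) (excenter B C A) = 0"
    and "cross2 (A + B) (excenter C A B) = 0"
  shows "mittenpunkt A B C = 0"
proof -
  define la lb lc where "la = dist B C" and "lb = dist C A" and "lc = dist A B"
  define wa wb wc where "wa = la * (- la + lb + lc)" and "wb = lb * (la - lb + lc)"
    and "wc = lc * (la + lb - lc)"
  define \<alpha> \<beta> \<gamma> where "\<alpha> = cross2 B C" and "\<beta> = cross2 C A" and "\<gamma> = cross2 A B"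
  \<comment> \<open>\<open>(\<alpha> : \<beta> : \<gamma>)\<close> are barycentric coordinates of the origin; the lines through it force them
      to be proportional to the Mittenpunkt weights.\<close>
  have "\<not> collinear {B, C, A}" "\<not> collinear {C, A, B}"
    using assms(1) by (simp_all add: insert_commute)
  then have E1: "la * (\<gamma> - \<beta>) + (lc - lb) * \<alpha> = 0"
    and E2: "lb * (\<alpha> - \<gamma>) + (la - lc) * \<beta> = 0"
    and E3: "lc * (\<beta> - \<alpha>) + (lb - la) * \<gamma> = 0"
    using cross2_midpoint_excenter_eq_0D assms
    by (simp_all add: la_def lb_def lc_def \<alpha>_def \<beta>_def \<gamma>_def)
  have "(\<alpha> + \<beta> + \<gamma>) * wa = (wa + wb + wc) * \<alpha>"
    "(\<alpha> + \<beta> + \<gamma>) * wb = (wa + wb + wc) * \<beta>"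
    "(\<alpha> + \<beta> + \<gamma>) * wc = (wa + wb + wc) * \<gamma>"
    unfolding wa_def wb_def wc_def using E1 E2 E3 by algebra+
  then have "(\<alpha> + \<beta> + \<gamma>) *\<^sub>R (wa *\<^sub>R A + wb *\<^sub>R B + wc *\<^sub>R C)
      = (wa + wb + wc) *\<^sub>R (\<alpha> *\<^sub>R A + \<beta> *\<^sub>R B + \<gamma> *\<^sub>R C)"
    by (simp add: scaleR_add_right)
  also have "\<dots> = 0"
    using cross2_scaleR_sum_eq_0[where A = A and B = B and C = C] by (simp add: \<alpha>_def \<beta>_def \<gamma>_def)
  finally have "(\<alpha> + \<beta> + \<gamma>) *\<^sub>R (wa *\<^sub>R A + wb *\<^sub>R B + wc *\<^sub>R C) = 0" .
  moreover have "\<alpha> + \<beta> + \<gamma> \<noteq> 0"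
  proof
    assume "\<alpha> + \<beta> + \<gamma> = 0"
    then have "cross2 (B - A) (C - A) = 0"
      unfolding cross2_diff_diff \<alpha>_def \<beta>_def \<gamma>_def by (simp add: add_ac)
    with assms(1) show False
      using collinear_if_cross2_eq_0 by blast
  qed
  ultimately have "wa *\<^sub>R A + wb *\<^sub>R B + wc *\<^sub>R C = 0"
    by simp
  then show ?thesis
    by (simp add: mittenpunkt_def Let_def la_def lb_def lc_def wa_def wb_def wc_def)
qed

section \<open>Tangents and poles of the ellipse\<close>

lemma inner_ellipse_normal_commute: "ellipse_normal a b P \<bullet> Q = ellipse_normal a b Q \<bullet> P"
  by (simp add: ellipse_normal_def inner_prod_def mult.commute)

lemma on_ellipse_iff_inner_normal: "on_ellipse a b P \<longleftrightarrow> ellipse_normal a b P \<bullet> P = 1"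
  by (simp add: on_ellipse_def ellipse_normal_def inner_prod_def power2_eq_square)

lemma ellipse_normal_diff: "ellipse_normal a b P - ellipse_normal a b Q = ellipse_normal a b (P - Q)"
  by (simp add: ellipse_normal_def diff_divide_distrib)

lemma ellipse_normal_eq_0_iff: "a \<noteq> 0 \<Longrightarrow> b \<noteq> 0 \<Longrightarrow> ellipse_normal a b P = 0 \<longleftrightarrow> P = 0"
  by (simp add: ellipse_normal_def prod_eq_iff)

lemma tangent_point_eqI:
  assumes "on_ellipse a b P"
    and "ellipse_normal a b P \<bullet> Y = ellipse_normal a b P \<bullet> Z" and "cross2 P Y = cross2 P Z"
  shows "Y = Z"
proof -
  let ?n = "ellipse_normal a b P" and ?d = "Y - Z"
  have nP: "?n \<bullet> P = 1"
    using assms(1) by (simp add: on_ellipse_iff_inner_normal)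
  have dec: "(P \<bullet> P) *\<^sub>R ?d = (P \<bullet> ?d) *\<^sub>R P"
    using inner_cross2_decomposition[of P ?d] assms(3) by (simp add: cross2_diff_right zero_prod_def[symmetric])
  then have "?n \<bullet> ((P \<bullet> P) *\<^sub>R ?d) = ?n \<bullet> ((P \<bullet> ?d) *\<^sub>R P)"
    by simp
  then have "(P \<bullet> P) * (?n \<bullet> ?d) = P \<bullet> ?d"
    using nP by simp
  then have "P \<bullet> ?d = 0"
    using assms(2) by (simp add: inner_diff_right)
  moreover have "P \<noteq> 0"
    using nP by auto
  ultimately show ?thesis
    using dec by simp
qed

lemma linear_cross2: "linear (cross2 P)"
  by (rule linearI) (simp_all add: cross2_add_right cross2_scaleR_right)

lemma tangent_closed_segment_iff:
  assumes "on_ellipse a b P" and "ellipse_normal a b P \<bullet> Y = 1" and "ellipse_normal a b P \<bullet> Z = 1"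
  shows "X \<in> closed_segment Y Z \<longleftrightarrow>
    ellipse_normal a b P \<bullet> X = 1 \<and> cross2 P X \<in> closed_segment (cross2 P Y) (cross2 P Z)"
proof -
  have tangent: "ellipse_normal a b P \<bullet> W = 1" if W: "W \<in> closed_segment Y Z" for W
  proof -
    obtain u where "W = (1 - u) *\<^sub>R Y + u *\<^sub>R Z"
      using W unfolding in_segment by blast
    then show ?thesis
      using assms(2,3) by (simp add: inner_add_right)
  qed
  show ?thesis
  proof
    assume "X \<in> closed_segment Y Z"
    then show "ellipse_normal a b P \<bullet> X = 1 \<and> cross2 P X \<in> closed_segment (cross2 P Y) (cross2 P Z)"
      using tangent closed_segment_linear_image[OF linear_cross2] by blast
  next
    assume "ellipse_normal a b P \<bullet> X = 1 \<and> cross2 P X \<in> closed_segment (cross2 P Y) (cross2 P Z)"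
    then obtain W where W: "W \<in> closed_segment Y Z" "cross2 P X = cross2 P W"
      and X: "ellipse_normal a b P \<bullet> X = 1"
      using closed_segment_linear_image[OF linear_cross2] by blast
    have "X = W"
      using tangent_point_eqI[OF assms(1)] X tangent[OF W(1)] W(2) by simp
    with W(1) show "X \<in> closed_segment Y Z"
      by simp
  qed
qed

lemma cross2_pole_midpoint:
  assumes "a \<noteq> 0" and "b \<noteq> 0" and "on_ellipse a b P" and "on_ellipse a b Q" and "P \<noteq> Q"
    and "ellipse_normal a b P \<bullet> Y = 1" and "ellipse_normal a b Q \<bullet> Y = 1"
  shows "cross2 (P + Q) Y = 0"
proof -
  define d where "d = ellipse_normal a b (P - Q)"
  have "d \<noteq> 0"
    using assms(1,2,5) by (simp add: d_def ellipse_normal_eq_0_iff)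
  have "d \<bullet> Y = 0"
    using assms(6,7) by (simp add: d_def ellipse_normal_diff[symmetric] inner_diff_left)
  moreover have "d \<bullet> (P + Q) = 0"
    using assms(3,4) inner_ellipse_normal_commute[of a b P Q]
    by (simp add: d_def ellipse_normal_diff[symmetric] inner_diff_left inner_add_right
        on_ellipse_iff_inner_normal)
  ultimately have "(d \<bullet> d) * cross2 (P + Q) Y = 0"
    by (simp add: cross2_lagrange)
  with \<open>d \<noteq> 0\<close> show ?thesis
    by simp
qed

lemma ellipse_normal_orthogonal_external_bisector:
  fixes P Q R :: pt
  assumes "normal_bisects a b P Q R" and "\<not> collinear {P, Q, R}"
  shows "ellipse_normal a b P \<bullet> (dist P R *\<^sub>R (Q - P) - dist P Q *\<^sub>R (R - P)) = 0"
proof -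
  let ?n = "ellipse_normal a b P"
  define uQ uR where "uQ = (Q - P) /\<^sub>R norm (Q - P)" and "uR = (R - P) /\<^sub>R norm (R - P)"
  have "cross2 (Q - P) (R - P) \<noteq> 0"
    using assms(2) collinear_if_cross2_eq_0 by blast
  then have "Q \<noteq> P" "R \<noteq> P"
    by (auto simp: cross2_def)
  then have unit: "uQ \<bullet> uQ = 1" "uR \<bullet> uR = 1"
    by (simp_all add: uQ_def uR_def inner_commute power2_norm_eq_inner[symmetric] divide_inverse
        power_mult_distrib power_inverse)
  with \<open>cross2 (Q - P) (R - P) \<noteq> 0\<close> have "cross2 uQ uR \<noteq> 0"
    using \<open>Q \<noteq> P\<close> \<open>R \<noteq> P\<close> by (simp add: uQ_def uR_def cross2_scaleR_left cross2_scaleR_right)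
  have "uQ + uR \<noteq> 0"
  proof
    assume "uQ + uR = 0"
    then have "uR = - uQ"
      by (simp add: add_eq_0_iff)
    with \<open>cross2 uQ uR \<noteq> 0\<close> show False
      by (simp add: cross2_def)
  qed
  moreover have "cross2 (uQ + uR) ?n = 0"
    using assms(1) by (simp add: normal_bisects_def int_bisector_dir_def uQ_def uR_def)
  moreover have "(uQ + uR) \<bullet> (uQ - uR) = 0"
    using unit by (simp add: inner_add_left inner_diff_right inner_commute[of uR uQ])
  ultimately have "?n \<bullet> (uQ - uR) = 0"
    using inner_lagrange[of "uQ + uR" ?n "uQ - uR"] by simp
  moreover have "dist P R *\<^sub>R (Q - P) - dist P Q *\<^sub>R (R - P) = (dist P Q * dist P R) *\<^sub>R (uQ - uR)"
  proof -
    have "dist P Q = norm (Q - P)" "dist P R = norm (R - P)"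
      by (simp_all add: dist_norm norm_minus_commute)
    with \<open>Q \<noteq> P\<close> \<open>R \<noteq> P\<close> show ?thesis
      by (simp add: uQ_def uR_def scaleR_diff_right field_simps)
  qed
  ultimately show ?thesis
    by simp
qed

lemma excenters_on_tangent:
  fixes P Q R :: pt
  assumes "normal_bisects a b P Q R" and "on_ellipse a b P" and "\<not> collinear {P, Q, R}"
  shows "ellipse_normal a b P \<bullet> excenter Q R P = 1" and "ellipse_normal a b P \<bullet> excenter R P Q = 1"
proof -
  let ?n = "ellipse_normal a b P"
  have v: "?n \<bullet> (dist R P *\<^sub>R (Q - P) - dist P Q *\<^sub>R (R - P)) = 0"
    using ellipse_normal_orthogonal_external_bisector[OF assms(1,3)] by (simp add: dist_commute)
  have "?n \<bullet> (excenter Q R P - P) = 0" "?n \<bullet> (excenter R P Q - P) = 0"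
    unfolding excenters_minus_vertex(2,3)[OF assms(3)] using v by (simp_all add: inner_diff_right)
  moreover have "?n \<bullet> P = 1"
    using assms(2) by (simp add: on_ellipse_iff_inner_normal)
  ultimately show "?n \<bullet> excenter Q R P = 1" "?n \<bullet> excenter R P Q = 1"
    by (simp_all add: inner_diff_right)
qed

lemma bisector_chord_relation:
  fixes P Q R :: pt
  assumes "normal_bisects a b P Q R" and "on_ellipse a b P" and "\<not> collinear {P, Q, R}"
  shows "dist P R * (1 - ellipse_normal a b P \<bullet> Q) = dist P Q * (1 - ellipse_normal a b P \<bullet> R)"
  using ellipse_normal_orthogonal_external_bisector[OF assms(1,3)] assms(2)
  by (simp add: on_ellipse_iff_inner_normal inner_diff_right algebra_simps)

lemma norm_eq_if_on_tangent_parallel_chord: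
  assumes "on_ellipse a b P" and "ellipse_normal a b P \<bullet> (t *\<^sub>R (Q - P)) = 1"
    and "1 - ellipse_normal a b P \<bullet> Q = dist P Q / r" and "r > 0"
  shows "norm (t *\<^sub>R (Q - P)) = r"
proof -
  have "t * (ellipse_normal a b P \<bullet> Q - 1) = 1"
    using assms(1,2) by (simp add: inner_diff_right on_ellipse_iff_inner_normal right_diff_distrib)
  moreover have "ellipse_normal a b P \<bullet> Q - 1 = - (dist P Q / r)"
    using assms(3) by simp
  ultimately have "t * dist P Q = - r"
    using assms(4) by (simp add: field_simps)
  then have "\<bar>t\<bar> * dist P Q = r"
    using assms(4) by (metis abs_minus_cancel abs_mult abs_of_pos abs_of_nonneg zero_le_dist)
  then show ?thesis
    by (simp add: dist_norm norm_minus_commute)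
qed

section \<open>Unit-circle coordinates on the ellipse\<close>

lemma on_ellipse_unit_coords:
  assumes "a \<noteq> 0" and "b \<noteq> 0" and "on_ellipse a b P"
  obtains u w where "P = (a * u, b * w)" and "u^2 + w^2 = 1"
proof
  show "P = (a * (fst P / a), b * (snd P / b))"
    using assms(1,2) by simp
  show "(fst P / a)^2 + (snd P / b)^2 = 1"
    using assms(3) by (simp add: on_ellipse_def power_divide)
qed

lemma ellipse_normal_inner_stretch:
  "a \<noteq> 0 \<Longrightarrow> b \<noteq> 0 \<Longrightarrow> ellipse_normal a b (a * u1, b * w1) \<bullet> (a * u2, b * w2) = u1 * u2 + w1 * w2"
  by (simp add: ellipse_normal_def power2_eq_square)

lemma cross2_stretch: "cross2 (a * u1, b * w1) (a * u2, b * w2) = a * b * (u1 * w2 - w1 * u2)"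
  by (simp add: algebra_simps)

lemma dist_stretch_sq:
  "(dist (a * u1, b * w1) (a * u2, b * w2))^2 = a^2 * (u1 - u2)^2 + b^2 * (w1 - w2)^2"
  by (simp add: dist_Pair_Pair dist_real_def power_mult_distrib right_diff_distrib[symmetric])

lemma chord_defect_pos:
  assumes "a \<noteq> 0" and "b \<noteq> 0" and "on_ellipse a b P" and "on_ellipse a b Q" and "P \<noteq> Q"
  shows "1 - ellipse_normal a b P \<bullet> Q > 0"
proof -
  obtain u1 w1 where P: "P = (a * u1, b * w1)" "u1^2 + w1^2 = 1"
    by (rule on_ellipse_unit_coords[OF assms(1-3)])
  obtain u2 w2 where Q: "Q = (a * u2, b * w2)" "u2^2 + w2^2 = 1"
    by (rule on_ellipse_unit_coords[OF assms(1,2,4)])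
  have "1 - (u1 * u2 + w1 * w2) = ((u1 - u2)^2 + (w1 - w2)^2) / 2"
    using P(2) Q(2) by algebra
  moreover have "(u1 - u2)^2 + (w1 - w2)^2 > 0"
    using assms(5) P(1) Q(1) by (auto simp: sum_power2_gt_zero_iff)
  ultimately show ?thesis
    using assms(1,2) by (simp add: P Q ellipse_normal_inner_stretch)
qed

lemma chord_cross2_identity:
  assumes "a \<noteq> 0" and "b \<noteq> 0" and "on_ellipse a b P" and "on_ellipse a b Q"
  shows "(cross2 P Q)^2 + (a * b)^2 * (1 - ellipse_normal a b P \<bullet> Q)^2
    = 2 * (a * b)^2 * (1 - ellipse_normal a b P \<bullet> Q)"
proof -
  obtain u1 w1 where P: "P = (a * u1, b * w1)" "u1^2 + w1^2 = 1"
    by (rule on_ellipse_unit_coords[OF assms(1-3)])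
  obtain u2 w2 where Q: "Q = (a * u2, b * w2)" "u2^2 + w2^2 = 1"
    by (rule on_ellipse_unit_coords[OF assms(1,2,4)])
  show ?thesis
    unfolding P(1) Q(1) cross2_stretch ellipse_normal_inner_stretch[OF assms(1,2)]
    using P(2) Q(2) by algebra
qed

lemma chord_cross2_identity3:
  assumes "a \<noteq> 0" and "b \<noteq> 0"
    and "on_ellipse a b P1" and "on_ellipse a b P2" and "on_ellipse a b P3"
  shows "(a * b)^2 * ((1 - ellipse_normal a b P1 \<bullet> P2) * (1 - ellipse_normal a b P1 \<bullet> P3))
      + cross2 P1 P2 * cross2 P1 P3
    = (a * b)^2 * ((1 - ellipse_normal a b P1 \<bullet> P2) + (1 - ellipse_normal a b P1 \<bullet> P3)
      - (1 - ellipse_normal a b P2 \<bullet> P3))"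
proof -
  obtain u1 w1 where P1: "P1 = (a * u1, b * w1)" "u1^2 + w1^2 = 1"
    by (rule on_ellipse_unit_coords[OF assms(1-3)])
  obtain u2 w2 where P2: "P2 = (a * u2, b * w2)" "u2^2 + w2^2 = 1"
    by (rule on_ellipse_unit_coords[OF assms(1,2,4)])
  obtain u3 w3 where P3: "P3 = (a * u3, b * w3)" "u3^2 + w3^2 = 1"
    by (rule on_ellipse_unit_coords[OF assms(1,2,5)])
  show ?thesis
    unfolding P1(1) P2(1) P3(1) cross2_stretch ellipse_normal_inner_stretch[OF assms(1,2)]
    using P1(2) P2(2) P3(2) by algebra
qed

lemma pole_cross2:
  assumes "a \<noteq> 0" and "b \<noteq> 0" and "on_ellipse a b P" and "on_ellipse a b Q"
    and "ellipse_normal a b P \<bullet> Y = 1" and "ellipse_normal a b Q \<bullet> Y = 1"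
  shows "cross2 P Y * cross2 P Q = (a * b)^2 * (1 - ellipse_normal a b P \<bullet> Q)"
proof -
  obtain u1 w1 where P: "P = (a * u1, b * w1)" "u1^2 + w1^2 = 1"
    by (rule on_ellipse_unit_coords[OF assms(1-3)])
  obtain u2 w2 where Q: "Q = (a * u2, b * w2)" "u2^2 + w2^2 = 1"
    by (rule on_ellipse_unit_coords[OF assms(1,2,4)])
  define e1 e2 where "e1 = fst Y / a" and "e2 = snd Y / b"
  have Y: "Y = (a * e1, b * e2)"
    using assms(1,2) by (simp add: e1_def e2_def)
  have "u1 * e1 + w1 * e2 = 1" "u2 * e1 + w2 * e2 = 1"
    using assms(5,6) unfolding P(1) Q(1) Y ellipse_normal_inner_stretch[OF assms(1,2)] by simp_all
  then show ?thesis
    unfolding P(1) Q(1) Y cross2_stretch ellipse_normal_inner_stretch[OF assms(1,2)]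
    using P(2) by algebra
qed

(* If Q is at angle theta from P in the unit-circle parametrisation, then cross2 P Y = a b tan (theta/2)
   for the pole Y of PQ; these are the half-angle formulas for 1 - cos theta and a b sin theta. *)
lemma pole_half_angle_formulas:
  assumes "a \<noteq> 0" and "b \<noteq> 0" and "on_ellipse a b P" and "on_ellipse a b Q" and "P \<noteq> Q"
    and "ellipse_normal a b P \<bullet> Y = 1" and "ellipse_normal a b Q \<bullet> Y = 1"
  defines "K \<equiv> (a * b)^2" and "p \<equiv> cross2 P Y" and "c \<equiv> 1 - ellipse_normal a b P \<bullet> Q"
  shows "c * (K + p^2) = 2 * p^2" and "cross2 P Q * (K + p^2) = 2 * K * p"
proof -
  have "K > 0" "c > 0"
    using assms(1-5) chord_defect_pos by (simp_all add: K_def c_def)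
  have pole: "p * cross2 P Q = K * c"
    using pole_cross2[OF assms(1-4,6,7)] by (simp add: K_def p_def c_def)
  have circle: "(cross2 P Q)^2 + K * c^2 = 2 * K * c"
    using chord_cross2_identity[OF assms(1-4)] by (simp add: K_def c_def)
  have "(K * c) * (c * (K + p^2)) = (K * c) * (2 * p^2)"
    using pole circle by algebra
  with \<open>K > 0\<close> \<open>c > 0\<close> show c: "c * (K + p^2) = 2 * p^2"
    by simp
  have "p \<noteq> 0"
    using pole \<open>K > 0\<close> \<open>c > 0\<close> by auto
  moreover have "p * (cross2 P Q * (K + p^2)) = p * (2 * K * p)"
    using pole c by algebra
  ultimately show "cross2 P Q * (K + p^2) = 2 * K * p"
    by simp
qed

lemma half_angle_parallel_coordinate:
  fixes K p q cQ cR xQ xR t :: real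
  assumes "K > 0"
    and "cQ * (K + p^2) = 2 * p^2" and "xQ * (K + p^2) = 2 * K * p"
    and "cR * (K + q^2) = 2 * q^2" and "xR * (K + q^2) = 2 * K * q"
    and "t * (cQ - cR) = 1"
  shows "t * (xR - xQ) * (p + q) = p * q - K"
proof -
  define x where "x = t * (xR - xQ)"
  have "x * (cQ - cR) = xR - xQ"
    using assms(6) unfolding x_def by algebra
  then have "x * (cQ - cR) * ((K + p^2) * (K + q^2)) = (xR - xQ) * ((K + p^2) * (K + q^2))"
    by simp
  then have "2 * K * ((p - q) * (x * (p + q) - (p * q - K))) = 0"
    using assms(2-5) by algebra
  moreover have "p \<noteq> q"
  proof
    assume "p = q"
    then have "cQ * (K + p^2) = cR * (K + p^2)"
      using assms(2,4) by simp
    moreover have "K + p^2 > 0"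
      using assms(1) by (simp add: add_pos_nonneg)
    ultimately show False
      using assms(6) by simp
  qed
  ultimately show ?thesis
    using assms(1) by (simp add: x_def)
qed

lemma parallel_through_center_misses_tangent_side:
  assumes "a \<noteq> 0" and "b \<noteq> 0"
    and "on_ellipse a b P" and "on_ellipse a b Q" and "on_ellipse a b R" and "P \<noteq> Q" and "P \<noteq> R"
    and "ellipse_normal a b P \<bullet> Y = 1" and "ellipse_normal a b Q \<bullet> Y = 1"
    and "ellipse_normal a b P \<bullet> Z = 1" and "ellipse_normal a b R \<bullet> Z = 1"
  shows "t *\<^sub>R (R - Q) \<notin> closed_segment Z Y"
proof
  define K p q x where "K = (a * b)^2" and "p = cross2 P Y" and "q = cross2 P Z"
    and "x = cross2 P (t *\<^sub>R (R - Q))"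
  assume "t *\<^sub>R (R - Q) \<in> closed_segment Z Y"
  then have X: "ellipse_normal a b P \<bullet> (t *\<^sub>R (R - Q)) = 1" and "x \<in> closed_segment q p"
    using tangent_closed_segment_iff[OF assms(3,10,8)] by (simp_all add: p_def q_def x_def)
  have "K > 0"
    using assms(1,2) by (simp add: K_def)
  have "t * ((1 - ellipse_normal a b P \<bullet> Q) - (1 - ellipse_normal a b P \<bullet> R)) = 1"
    using X by (simp add: inner_diff_right algebra_simps)
  then have "x * (p + q) = p * q - K"
    using half_angle_parallel_coordinate[OF \<open>K > 0\<close>
        pole_half_angle_formulas[OF assms(1-4,6,8,9), folded K_def p_def]
        pole_half_angle_formulas[OF assms(1-3,5,7,10,11), folded K_def q_def]]
    by (simp add: x_def cross2_scaleR_right cross2_diff_right)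
  then have "(x - q) * (x - p) = x^2 + K"
    by algebra
  with \<open>K > 0\<close> have "(x - q) * (x - p) > 0"
    by (simp add: add_nonneg_pos)
  with \<open>x \<in> closed_segment q p\<close> show False
    by (simp add: mem_closed_segment_real_iff)
qed

lemma half_angle_coordinate_between:
  fixes K c p q x :: real
  assumes "K > 0" and "c > 0" and "p * x = K * c" and "p * q + K < 0"
  shows "- x / c \<in> closed_segment q p"
proof -
  have "p \<noteq> 0"
    using assms by auto
  then have "- x / c = - K / p"
    using assms(2,3) by (simp add: field_simps)
  moreover have "(- K / p - q) * (- K / p - p) = (p * q + K) * (K + p^2) / p^2"
    using \<open>p \<noteq> 0\<close> by (simp add: field_simps power2_eq_square)
  moreover have "(p * q + K) * (K + p^2) < 0"
    using assms(1,4) by (simp add: mult_neg_pos add_pos_nonneg)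
  then have "(p * q + K) * (K + p^2) / p^2 \<le> 0"
    using \<open>p \<noteq> 0\<close> by (simp add: divide_nonpos_pos)
  ultimately show ?thesis
    by (simp add: mem_closed_segment_real_iff)
qed

lemma parallel_through_center_meets_tangent_side:
  assumes "a \<noteq> 0" and "b \<noteq> 0"
    and "on_ellipse a b P" and "on_ellipse a b Q" and "on_ellipse a b R" and "P \<noteq> Q" and "P \<noteq> R"
    and "ellipse_normal a b P \<bullet> Y = 1" and "ellipse_normal a b Q \<bullet> Y = 1"
    and "ellipse_normal a b P \<bullet> Z = 1" and "ellipse_normal a b R \<bullet> Z = 1"
    and "(1 - ellipse_normal a b P \<bullet> Q) + (1 - ellipse_normal a b P \<bullet> R)
      - (1 - ellipse_normal a b Q \<bullet> R) > 0"
    and "cross2 P Q * cross2 P R < 0"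
  shows "(- 1 / (1 - ellipse_normal a b P \<bullet> Q)) *\<^sub>R (Q - P) \<in> closed_segment Z Y"
proof -
  define K p q where "K = (a * b)^2" and "p = cross2 P Y" and "q = cross2 P Z"
  define cQ X where "cQ = 1 - ellipse_normal a b P \<bullet> Q" and "X = (- 1 / cQ) *\<^sub>R (Q - P)"
  have "K > 0"
    using assms(1,2) by (simp add: K_def)
  have "cQ > 0"
    using chord_defect_pos[OF assms(1-4,6)] by (simp add: cQ_def)
  have pQ: "p * cross2 P Q = K * cQ"
    using pole_cross2[OF assms(1-4,8,9)] by (simp add: K_def p_def cQ_def)
  have "(p * q + K) * (cross2 P Q * cross2 P R) = K * (K * ((1 - ellipse_normal a b P \<bullet> Q)
      + (1 - ellipse_normal a b P \<bullet> R) - (1 - ellipse_normal a b Q \<bullet> R)))"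
    using pQ pole_cross2[OF assms(1-3,5,10,11)] chord_cross2_identity3[OF assms(1-5)]
    unfolding K_def p_def q_def cQ_def by algebra
  moreover have "K * (K * ((1 - ellipse_normal a b P \<bullet> Q) + (1 - ellipse_normal a b P \<bullet> R)
      - (1 - ellipse_normal a b Q \<bullet> R))) > 0"
    using \<open>K > 0\<close> assms(12) by simp
  ultimately have "p * q + K < 0"
    using assms(13) by (smt (verit) zero_less_mult_iff)
  moreover have "cross2 P X = - cross2 P Q / cQ"
    by (simp add: X_def cross2_minus_right cross2_scaleR_right cross2_diff_right cross2_self)
  ultimately have "cross2 P X \<in> closed_segment q p"
    using half_angle_coordinate_between[OF \<open>K > 0\<close> \<open>cQ > 0\<close> pQ] by simp
  moreover have "ellipse_normal a b P \<bullet> X = 1"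
    using assms(3) \<open>cQ > 0\<close>
    by (simp add: X_def cQ_def inner_diff_right on_ellipse_iff_inner_normal field_simps)
  ultimately show ?thesis
    using tangent_closed_segment_iff[OF assms(3,10,8)] by (simp add: X_def cQ_def p_def q_def)
qed

lemma pos_if_prod_pos_and_sums_pos:
  fixes x y z :: real
  assumes "x * y * z > 0" and "x + y > 0" and "x + z > 0" and "y + z > 0"
  shows "x > 0"
proof (rule ccontr)
  assume "\<not> x > 0"
  then have "y * z > 0"
    using assms(2,3) by simp
  then have "x * (y * z) \<le> 0"
    using \<open>\<not> x > 0\<close> by (simp add: mult_nonpos_nonneg)
  with assms(1) show False
    by (simp add: mult.assoc)
qed

(* P1 + P2 + P3 corresponds to the orthocentre z1 + z2 + z3 of the triangle inscribed in the unit
   circle, which lies inside the circle exactly when that triangle is acute. *)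
lemma sum_inside_ellipse_imp_acute:
  assumes "a \<noteq> 0" and "b \<noteq> 0"
    and "on_ellipse a b P1" and "on_ellipse a b P2" and "on_ellipse a b P3"
    and "P1 \<noteq> P2" and "P1 \<noteq> P3" and "P2 \<noteq> P3"
    and "ellipse_normal a b (P1 + P2 + P3) \<bullet> (P1 + P2 + P3) < 1"
  defines "c12 \<equiv> 1 - ellipse_normal a b P1 \<bullet> P2" and "c13 \<equiv> 1 - ellipse_normal a b P1 \<bullet> P3"
    and "c23 \<equiv> 1 - ellipse_normal a b P2 \<bullet> P3"
  shows "c12 + c13 - c23 > 0" and "c12 + c23 - c13 > 0" and "c13 + c23 - c12 > 0"
proof -
  obtain u1 w1 where P1: "P1 = (a * u1, b * w1)" "u1^2 + w1^2 = 1"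
    by (rule on_ellipse_unit_coords[OF assms(1-3)])
  obtain u2 w2 where P2: "P2 = (a * u2, b * w2)" "u2^2 + w2^2 = 1"
    by (rule on_ellipse_unit_coords[OF assms(1,2,4)])
  obtain u3 w3 where P3: "P3 = (a * u3, b * w3)" "u3^2 + w3^2 = 1"
    by (rule on_ellipse_unit_coords[OF assms(1,2,5)])
  note inner_stretch = ellipse_normal_inner_stretch[OF assms(1,2)]
  have c: "c12 > 0" "c13 > 0" "c23 > 0"
    unfolding c12_def c13_def c23_def using chord_defect_pos[OF assms(1-4,6)]
      chord_defect_pos[OF assms(1-3,5,7)] chord_defect_pos[OF assms(1,2,4,5,8)] by simp_all
  have "P1 + P2 + P3 = (a * (u1 + u2 + u3), b * (w1 + w2 + w3))"
    by (simp add: P1(1) P2(1) P3(1) algebra_simps)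
  then have "(u1 + u2 + u3)^2 + (w1 + w2 + w3)^2 < 1"
    using assms(9) by (simp add: inner_stretch power2_eq_square)
  moreover have "(c12 + c13 - c23) * (c12 + c23 - c13) * (c13 + c23 - c12)
      = c12 * c13 * c23 * (1 - ((u1 + u2 + u3)^2 + (w1 + w2 + w3)^2))"
    unfolding c12_def c13_def c23_def P1(1) P2(1) P3(1) inner_stretch
    using P1(2) P2(2) P3(2) by algebra
  ultimately have "(c12 + c13 - c23) * (c12 + c23 - c13) * (c13 + c23 - c12) > 0"
    using c by simp
  then show "c12 + c13 - c23 > 0" "c12 + c23 - c13 > 0" "c13 + c23 - c12 > 0"
    using c pos_if_prod_pos_and_sums_pos[of "c12 + c13 - c23" "c12 + c23 - c13" "c13 + c23 - c12"]
      pos_if_prod_pos_and_sums_pos[of "c12 + c23 - c13" "c12 + c13 - c23" "c13 + c23 - c12"]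
      pos_if_prod_pos_and_sums_pos[of "c13 + c23 - c12" "c12 + c13 - c23" "c12 + c23 - c13"]
    by (simp_all add: ac_simps)
qed

lemma opposite_sides_if_acute:
  assumes "a \<noteq> 0" and "b \<noteq> 0"
    and "on_ellipse a b P1" and "on_ellipse a b P2" and "on_ellipse a b P3"
    and "\<not> collinear {P1, P2, P3}"
  defines "c12 \<equiv> 1 - ellipse_normal a b P1 \<bullet> P2" and "c13 \<equiv> 1 - ellipse_normal a b P1 \<bullet> P3"
    and "c23 \<equiv> 1 - ellipse_normal a b P2 \<bullet> P3"
  assumes "c12 + c23 - c13 > 0" and "c13 + c23 - c12 > 0"
  shows "cross2 P1 P2 * cross2 P1 P3 < 0"
proof -
  obtain u1 w1 where P1: "P1 = (a * u1, b * w1)" "u1^2 + w1^2 = 1"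
    by (rule on_ellipse_unit_coords[OF assms(1-3)])
  obtain u2 w2 where P2: "P2 = (a * u2, b * w2)" "u2^2 + w2^2 = 1"
    by (rule on_ellipse_unit_coords[OF assms(1,2,4)])
  obtain u3 w3 where P3: "P3 = (a * u3, b * w3)" "u3^2 + w3^2 = 1"
    by (rule on_ellipse_unit_coords[OF assms(1,2,5)])
  define x12 x13 x23 where "x12 = u1 * w2 - w1 * u2" and "x13 = u1 * w3 - w1 * u3"
    and "x23 = u2 * w3 - w2 * u3"
  note inner_stretch = ellipse_normal_inner_stretch[OF assms(1,2)]
  have nc: "cross2 (P2 - P1) (P3 - P1) \<noteq> 0"
    using assms(6) collinear_if_cross2_eq_0 by blast
  then have "P1 \<noteq> P2" "P1 \<noteq> P3" "P2 \<noteq> P3"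
    by (auto simp: cross2_def)
  then have c: "c12 > 0" "c13 > 0" "c23 > 0"
    unfolding c12_def c13_def c23_def
    using chord_defect_pos[OF assms(1,2,3,4)] chord_defect_pos[OF assms(1,2,3,5)]
      chord_defect_pos[OF assms(1,2,4,5)] by simp_all
  have "cross2 (P2 - P1) (P3 - P1) = a * b * (x12 + x23 - x13)"
    by (simp add: P1(1) P2(1) P3(1) x12_def x13_def x23_def algebra_simps)
  with nc have s: "x12 + x23 - x13 \<noteq> 0"
    by auto
  have e: "2 * c12 * c23 * (- x13) = (c12 + c23 - c13) * (x12 + x23 - x13)"
    "2 * c13 * c23 * x12 = (c13 + c23 - c12) * (x12 + x23 - x13)"
    unfolding c12_def c13_def c23_def x12_def x13_def x23_def P1(1) P2(1) P3(1) inner_stretch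
    using P1(2) P2(2) P3(2) by algebra+
  have "(2 * c12 * c23) * (2 * c13 * c23) * (- x12 * x13)
      = (c12 + c23 - c13) * (c13 + c23 - c12) * (x12 + x23 - x13)^2"
    using arg_cong2[OF e, of "(*)"] by (simp add: power2_eq_square algebra_simps)
  moreover have "(c12 + c23 - c13) * (c13 + c23 - c12) * (x12 + x23 - x13)^2 > 0"
    using assms(10,11) s by simp
  moreover have "(2 * c12 * c23) * (2 * c13 * c23) > 0"
    using c by simp
  ultimately have "- x12 * x13 > 0"
    using zero_less_mult_pos by metis
  then have "x12 * x13 < 0"
    by simp
  moreover have "cross2 P1 P2 * cross2 P1 P3 = (a * b)^2 * (x12 * x13)"
    by (simp add: P1(1) P2(1) P3(1) cross2_stretch x12_def x13_def power2_eq_square algebra_simps)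
  ultimately show ?thesis
    using assms(1,2) by (simp add: mult_pos_neg)
qed

section \<open>The chord ratio and the radius\<close>

lemma symmetric_biquadratic_three_roots:
  fixes z1 z2 z3 B k :: complex
  defines "F \<equiv> \<lambda>x y. x^2 + y^2 - B * (x^2 * y^2 + 1) - 2 * k * x * y"
  assumes "F z1 z2 = 0" and "F z1 z3 = 0" and "F z2 z3 = 0"
    and "z1 \<noteq> z2" and "z1 \<noteq> z3" and "z2 \<noteq> z3"
  shows "2 * k = B^2 - 1" and "z1 + z2 + z3 + B * (z1 * z2 * z3) = 0"
proof -
  have F12: "z1^2 + z2^2 - B * (z1^2 * z2^2 + 1) - 2 * k * z1 * z2 = 0"
    and F13: "z1^2 + z3^2 - B * (z1^2 * z3^2 + 1) - 2 * k * z1 * z3 = 0"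
    and F23: "z2^2 + z3^2 - B * (z2^2 * z3^2 + 1) - 2 * k * z2 * z3 = 0"
    using assms(2-4) by (simp_all add: F_def)
  have "(z2 - z3) * ((z2 + z3) * (1 - B * z1^2) - 2 * k * z1) = 0"
    using F12 F13 by algebra
  then have S1: "(z2 + z3) * (1 - B * z1^2) - 2 * k * z1 = 0"
    using assms(7) by simp
  have "(z1 - z3) * ((z1 + z3) * (1 - B * z2^2) - 2 * k * z2) = 0"
    using F12 F23 by algebra
  then have S2: "(z1 + z3) * (1 - B * z2^2) - 2 * k * z2 = 0"
    using assms(6) by simp
  have R1: "(1 - B * z1^2) * z2 * z3 - (z1^2 - B) = 0"
    using F12 S1 by algebra
  have R2: "(1 - B * z2^2) * z1 * z3 - (z2^2 - B) = 0"
    using F12 S2 by algebra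
  have "(z1 - z2) * (z1 + z2 + z3 + B * (z1 * z2 * z3)) = 0"
    using R1 R2 by algebra
  then show sum: "z1 + z2 + z3 + B * (z1 * z2 * z3) = 0"
    using assms(5) by simp
  have "(z1 - z2) * (z1 * z2 + z2 * z3 + z3 * z1 + B) = 0"
    using R1 R2 sum by algebra
  then have E2: "z1 * z2 + z2 * z3 + z3 * z1 + B = 0"
    using assms(5) by simp
  have "(z1 - z2) * (2 * k + 1 + B * (z1 * z2 + z2 * z3 + z3 * z1)) = 0"
    using S1 S2 by algebra
  then have "2 * k + 1 + B * (z1 * z2 + z2 * z3 + z3 * z1) = 0"
    using assms(5) by simp
  then show "2 * k = B^2 - 1"
    using E2 by algebra
qed

(* For unit z = u1 + i w1 and z' = u2 + i w2, multiplying 1 - Re (z cnj z') = A - B Re (z z') by 2 z z'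
   gives the relation F z z' = 0 of symmetric_biquadratic_three_roots with k = 1 - A. *)
lemma unit_chord_relation_complex:
  fixes u1 w1 u2 w2 A B :: real
  assumes "u1^2 + w1^2 = 1" and "u2^2 + w2^2 = 1"
    and "1 - (u1 * u2 + w1 * w2) = A - B * (u1 * u2 - w1 * w2)"
  shows "(Complex u1 w1)^2 + (Complex u2 w2)^2 - of_real B * ((Complex u1 w1)^2 * (Complex u2 w2)^2 + 1)
     - 2 * of_real (1 - A) * Complex u1 w1 * Complex u2 w2 = 0"
proof -
  have "u1 * u1 - w1 * w1 + (u2 * u2 - w2 * w2)
      - B * ((u1 * u1 - w1 * w1) * (u2 * u2 - w2 * w2) - 2 * u1 * w1 * (2 * u2 * w2) + 1)
      - 2 * (1 - A) * (u1 * u2 - w1 * w2) = 0"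
    using assms by algebra
  moreover have "2 * u1 * w1 + 2 * u2 * w2
      - B * ((u1 * u1 - w1 * w1) * (2 * u2 * w2) + 2 * u1 * w1 * (u2 * u2 - w2 * w2))
      - 2 * (1 - A) * (u1 * w2 + w1 * u2) = 0"
    using assms by algebra
  ultimately show ?thesis
    by (simp add: complex_eq_iff power2_eq_square algebra_simps)
qed

lemma unit_triple_chord_relation:
  fixes u1 w1 u2 w2 u3 w3 A B :: real
  assumes "u1^2 + w1^2 = 1" and "u2^2 + w2^2 = 1" and "u3^2 + w3^2 = 1"
    and "1 - (u1 * u2 + w1 * w2) = A - B * (u1 * u2 - w1 * w2)"
    and "1 - (u1 * u3 + w1 * w3) = A - B * (u1 * u3 - w1 * w3)"
    and "1 - (u2 * u3 + w2 * w3) = A - B * (u2 * u3 - w2 * w3)"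
    and "(u1, w1) \<noteq> (u2, w2)" and "(u1, w1) \<noteq> (u3, w3)" and "(u2, w2) \<noteq> (u3, w3)"
  shows "B^2 + 2 * A - 3 = 0" and "(u1 + u2 + u3)^2 + (w1 + w2 + w3)^2 = B^2"
proof -
  define z1 z2 z3 where "z1 = Complex u1 w1" and "z2 = Complex u2 w2" and "z3 = Complex u3 w3"
  note roots = symmetric_biquadratic_three_roots[where B = "of_real B" and k = "of_real (1 - A)"]
  have "z1 \<noteq> z2" "z1 \<noteq> z3" "z2 \<noteq> z3"
    using assms(7-9) by (auto simp: z1_def z2_def z3_def)
  note rel = roots[OF _ _ _ this, unfolded z1_def z2_def z3_def,
      OF unit_chord_relation_complex[OF assms(1,2,4)] unit_chord_relation_complex[OF assms(1,3,5)]
        unit_chord_relation_complex[OF assms(2,3,6)], folded z1_def z2_def z3_def]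
  have "complex_of_real (2 * (1 - A)) = complex_of_real (B^2 - 1)"
    using rel(1) by simp
  then show "B^2 + 2 * A - 3 = 0"
    by (simp only: of_real_eq_iff) simp
  have "norm z1 = 1" "norm z2 = 1" "norm z3 = 1"
    using assms(1-3) by (simp_all add: z1_def z2_def z3_def cmod_def)
  moreover have "z1 + z2 + z3 = - (of_real B * (z1 * z2 * z3))"
    using rel(2) by (simp add: eq_neg_iff_add_eq_0)
  ultimately have "(norm (z1 + z2 + z3))^2 = B^2"
    by (simp add: norm_mult)
  then show "(u1 + u2 + u3)^2 + (w1 + w2 + w3)^2 = B^2"
    by (simp add: z1_def z2_def z3_def cmod_power2)
qed

definition billiard_radius :: "real \<Rightarrow> real \<Rightarrow> real" where
  "billiard_radius a b = sqrt ((a^2 + b^2 + 2 * sqrt (a^4 - a^2 * b^2 + b^4)) / 3)"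

lemma billiard_radius_sq:
  fixes a b :: real
  defines "\<rho> \<equiv> (billiard_radius a b)^2"
  shows "\<rho> = (a^2 + b^2 + 2 * sqrt (a^4 - a^2 * b^2 + b^4)) / 3"
    and "3 * \<rho>^2 - 2 * (a^2 + b^2) * \<rho> - (a^2 - b^2)^2 = 0"
    and "2 * (a^2 + b^2) \<le> 3 * \<rho>"
proof -
  define D where "D = sqrt (a^4 - a^2 * b^2 + b^4)"
  have "a^4 - a^2 * b^2 + b^4 = (a^2 - b^2)^2 + (a * b)^2"
    by (simp add: algebra_simps power2_eq_square power4_eq_xxxx)
  then have nonneg: "a^4 - a^2 * b^2 + b^4 \<ge> 0"
    by (simp add: sum_power2_ge_zero)
  then have D: "D \<ge> 0" "D^2 = a^4 - a^2 * b^2 + b^4"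
    by (simp_all add: D_def)
  have "a^2 + b^2 + 2 * D \<ge> 0"
    using D(1) by simp
  then show \<rho>: "\<rho> = (a^2 + b^2 + 2 * sqrt (a^4 - a^2 * b^2 + b^4)) / 3"
    by (simp add: \<rho>_def billiard_radius_def D_def[symmetric])
  show "3 * \<rho>^2 - 2 * (a^2 + b^2) * \<rho> - (a^2 - b^2)^2 = 0"
    unfolding \<rho> D_def[symmetric] using D(2)
    by (simp add: field_simps power2_eq_square power4_eq_xxxx)
  have "(2 * D)^2 - (a^2 + b^2)^2 = 3 * (a^2 - b^2)^2"
    using D(2) by algebra
  then have "(a^2 + b^2)^2 \<le> (2 * D)^2"
    by (smt (verit) zero_le_power2)
  then have "a^2 + b^2 \<le> 2 * D"
    by (rule power2_le_imp_le) (use D(1) in simp)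
  then show "2 * (a^2 + b^2) \<le> 3 * \<rho>"
    unfolding \<rho> D_def[symmetric] by simp
qed

lemma billiard_radius_sq_unique:
  assumes "x > 0" and "3 * x^2 - 2 * (a^2 + b^2) * x - (a^2 - b^2)^2 = 0"
  shows "x = (billiard_radius a b)^2"
proof -
  define \<rho> where "\<rho> = (billiard_radius a b)^2"
  note \<rho> = billiard_radius_sq[of a b, folded \<rho>_def]
  have "(x - \<rho>) * (3 * x + (3 * \<rho> - 2 * (a^2 + b^2))) = 0"
    using assms(2) \<rho>(2) by algebra
  moreover have "3 * x + (3 * \<rho> - 2 * (a^2 + b^2)) > 0"
    using assms(1) \<rho>(3) by (smt (verit))
  ultimately show ?thesis
    by (simp add: \<rho>_def)
qed

lemma billiard_radius_gt:
  fixes a b :: real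
  assumes "0 < b" and "b < a"
  shows "a < billiard_radius a b"
proof -
  define \<rho> where "\<rho> = (billiard_radius a b)^2"
  note \<rho> = billiard_radius_sq[of a b, folded \<rho>_def]
  have "(\<rho> - a^2) * (3 * \<rho> + a^2 - 2 * b^2) = b^4"
    using \<rho>(2) by algebra
  moreover have "b^4 > 0"
    using assms(1) by simp
  moreover have "3 * \<rho> + a^2 - 2 * b^2 > 0"
    using \<rho>(3) assms by (smt (verit) zero_less_power)
  ultimately have "a^2 < \<rho>"
    by (smt (verit) zero_less_mult_iff)
  then have "sqrt (a^2) < billiard_radius a b"
    unfolding \<rho>(1) billiard_radius_def by (rule real_sqrt_less_mono)
  then show ?thesis
    using assms by simp
qed

lemma unit_chord_defect_relation:
  fixes a b J u1 w1 u2 w2 :: real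
  assumes "u1^2 + w1^2 = 1" and "u2^2 + w2^2 = 1" and "1 - (u1 * u2 + w1 * w2) > 0"
    and "1 - (u1 * u2 + w1 * w2) = J * dist (a * u1, b * w1) (a * u2, b * w2)"
  shows "1 - (u1 * u2 + w1 * w2) = J^2 * (a^2 + b^2) - J^2 * (a^2 - b^2) * (u1 * u2 - w1 * w2)"
proof -
  define c E where "c = 1 - (u1 * u2 + w1 * w2)"
    and "E = (a^2 + b^2) - (a^2 - b^2) * (u1 * u2 - w1 * w2)"
  have "(dist (a * u1, b * w1) (a * u2, b * w2))^2 = c * E"
    unfolding dist_stretch_sq c_def E_def using assms(1,2) by algebra
  then have "c * c = c * (J^2 * E)"
    using assms(4) by (simp add: c_def power_mult_distrib power2_eq_square[symmetric])
  moreover have "c \<noteq> 0"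
    using assms(3) by (simp add: c_def)
  ultimately have "c = J^2 * E"
    by simp
  then show ?thesis
    by (simp add: c_def E_def algebra_simps)
qed

lemma chord_ratio_relations:
  assumes "a \<noteq> 0" and "b \<noteq> 0"
    and "on_ellipse a b P1" and "on_ellipse a b P2" and "on_ellipse a b P3"
    and "P1 \<noteq> P2" and "P1 \<noteq> P3" and "P2 \<noteq> P3"
    and "1 - ellipse_normal a b P1 \<bullet> P2 = J * dist P1 P2"
    and "1 - ellipse_normal a b P1 \<bullet> P3 = J * dist P1 P3"
    and "1 - ellipse_normal a b P2 \<bullet> P3 = J * dist P2 P3"
  shows "(J^2 * (a^2 - b^2))^2 + 2 * (J^2 * (a^2 + b^2)) - 3 = 0"
    and "ellipse_normal a b (P1 + P2 + P3) \<bullet> (P1 + P2 + P3) = (J^2 * (a^2 - b^2))^2"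
proof -
  obtain u1 w1 where P1: "P1 = (a * u1, b * w1)" "u1^2 + w1^2 = 1"
    by (rule on_ellipse_unit_coords[OF assms(1-3)])
  obtain u2 w2 where P2: "P2 = (a * u2, b * w2)" "u2^2 + w2^2 = 1"
    by (rule on_ellipse_unit_coords[OF assms(1,2,4)])
  obtain u3 w3 where P3: "P3 = (a * u3, b * w3)" "u3^2 + w3^2 = 1"
    by (rule on_ellipse_unit_coords[OF assms(1,2,5)])
  note inner_stretch = ellipse_normal_inner_stretch[OF assms(1,2)]
  have "1 - (u1 * u2 + w1 * w2) > 0" "1 - (u1 * u3 + w1 * w3) > 0" "1 - (u2 * u3 + w2 * w3) > 0"
    using chord_defect_pos[OF assms(1-4,6)] chord_defect_pos[OF assms(1-3,5,7)]
      chord_defect_pos[OF assms(1,2,4,5,8)] by (simp_all add: P1(1) P2(1) P3(1) inner_stretch)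
  moreover have "1 - (u1 * u2 + w1 * w2) = J * dist (a * u1, b * w1) (a * u2, b * w2)"
    "1 - (u1 * u3 + w1 * w3) = J * dist (a * u1, b * w1) (a * u3, b * w3)"
    "1 - (u2 * u3 + w2 * w3) = J * dist (a * u2, b * w2) (a * u3, b * w3)"
    using assms(9-11) by (simp_all add: P1(1) P2(1) P3(1) inner_stretch)
  ultimately have rel:
    "1 - (u1 * u2 + w1 * w2) = J^2 * (a^2 + b^2) - J^2 * (a^2 - b^2) * (u1 * u2 - w1 * w2)"
    "1 - (u1 * u3 + w1 * w3) = J^2 * (a^2 + b^2) - J^2 * (a^2 - b^2) * (u1 * u3 - w1 * w3)"
    "1 - (u2 * u3 + w2 * w3) = J^2 * (a^2 + b^2) - J^2 * (a^2 - b^2) * (u2 * u3 - w2 * w3)"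
    using unit_chord_defect_relation P1(2) P2(2) P3(2) by blast+
  have "(u1, w1) \<noteq> (u2, w2)" "(u1, w1) \<noteq> (u3, w3)" "(u2, w2) \<noteq> (u3, w3)"
    using assms(6-8) by (auto simp: P1(1) P2(1) P3(1))
  note core = unit_triple_chord_relation[OF P1(2) P2(2) P3(2) rel this]
  show "(J^2 * (a^2 - b^2))^2 + 2 * (J^2 * (a^2 + b^2)) - 3 = 0"
    by (rule core(1))
  have "P1 + P2 + P3 = (a * (u1 + u2 + u3), b * (w1 + w2 + w3))"
    by (simp add: P1(1) P2(1) P3(1) algebra_simps)
  with core(2) show "ellipse_normal a b (P1 + P2 + P3) \<bullet> (P1 + P2 + P3) = (J^2 * (a^2 - b^2))^2"
    by (simp add: inner_stretch power2_eq_square)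
qed

lemma chord_ratio_eq_inverse_radius:
  assumes "0 < b" and "b < a"
    and "on_ellipse a b P1" and "on_ellipse a b P2" and "on_ellipse a b P3"
    and "P1 \<noteq> P2" and "P1 \<noteq> P3" and "P2 \<noteq> P3"
    and "1 - ellipse_normal a b P1 \<bullet> P2 = J * dist P1 P2"
    and "1 - ellipse_normal a b P1 \<bullet> P3 = J * dist P1 P3"
    and "1 - ellipse_normal a b P2 \<bullet> P3 = J * dist P2 P3"
  shows "J * billiard_radius a b = 1"
    and "ellipse_normal a b (P1 + P2 + P3) \<bullet> (P1 + P2 + P3) < 1"
proof -
  have ab: "a \<noteq> 0" "b \<noteq> 0"
    using assms(1,2) by auto
  define A B where "A = J^2 * (a^2 + b^2)" and "B = J^2 * (a^2 - b^2)"
  note rel = chord_ratio_relations[OF ab assms(3-11), folded A_def B_def]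
  have "0 < J * dist P1 P2"
    using assms(9) chord_defect_pos[OF ab assms(3,4,6)] by simp
  then have "J > 0"
    by (auto simp: zero_less_mult_iff)
  define \<rho> where "\<rho> = 1 / J^2"
  have "3 * \<rho>^2 - 2 * (a^2 + b^2) * \<rho> - (a^2 - b^2)^2 = \<rho>^2 * (3 - B^2 - 2 * A)"
    using \<open>J > 0\<close> by (simp add: \<rho>_def A_def B_def field_simps power2_eq_square)
  then have "\<rho> = (billiard_radius a b)^2"
    using rel(1) \<open>J > 0\<close> by (intro billiard_radius_sq_unique) (simp_all add: \<rho>_def)
  then have "(J * billiard_radius a b)^2 = J^2 * \<rho>"
    by (simp add: power_mult_distrib)
  also have "\<dots> = 1"
    using \<open>J > 0\<close> by (simp add: \<rho>_def)
  finally have "(J * billiard_radius a b)^2 = 1" .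
  moreover have "J * billiard_radius a b > 0"
    using \<open>J > 0\<close> billiard_radius_gt[OF assms(1,2)] assms(1,2) by simp
  ultimately show "J * billiard_radius a b = 1"
    by (simp add: power2_eq_1_iff)
  have "B \<ge> 0"
    using assms(1,2) by (simp add: B_def power_strict_mono less_imp_le)
  moreover have "A > B"
    using assms(1) \<open>J > 0\<close> by (simp add: A_def B_def algebra_simps)
  ultimately show "ellipse_normal a b (P1 + P2 + P3) \<bullet> (P1 + P2 + P3) < 1"
    unfolding rel(2) using rel(1) by (smt (verit) power2_le_imp_le one_power2)
qed

section \<open>Billiard orbits\<close>

locale billiard_orbit =
  fixes a b :: real and P1 P2 P3 :: pt
  assumes b_pos: "0 < b" and b_less_a: "b < a" and billiard: "billiard3 a b P1 P2 P3"
begin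

abbreviation "I1 \<equiv> excenter P1 P2 P3"
abbreviation "I2 \<equiv> excenter P2 P3 P1"
abbreviation "I3 \<equiv> excenter P3 P1 P2"

lemma rotate: "billiard_orbit a b P2 P3 P1"
  using b_pos b_less_a billiard by unfold_locales (auto simp: billiard3_def insert_commute)

lemma rotate2: "billiard_orbit a b P3 P1 P2"
  using billiard_orbit.rotate[OF rotate] .

lemma ab_nonzero: "a \<noteq> 0" "b \<noteq> 0"
  using b_pos b_less_a by auto

lemma radius_pos: "billiard_radius a b > 0"
  using billiard_radius_gt[OF b_pos b_less_a] b_less_a b_pos by simp

lemma on_ellipse: "on_ellipse a b P1" "on_ellipse a b P2" "on_ellipse a b P3"
  and not_collinear: "\<not> collinear {P1, P2, P3}"
  using billiard by (simp_all add: billiard3_def)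

lemma distinct: "P1 \<noteq> P2" "P1 \<noteq> P3" "P2 \<noteq> P3"
  using not_collinear by (auto simp: collinear_2 insert_commute)

lemma tangent_at_P1: "ellipse_normal a b P1 \<bullet> I2 = 1" "ellipse_normal a b P1 \<bullet> I3 = 1"
  using excenters_on_tangent billiard not_collinear by (simp_all add: billiard3_def)

lemma poles:
  "ellipse_normal a b P1 \<bullet> I2 = 1" "ellipse_normal a b P1 \<bullet> I3 = 1"
  "ellipse_normal a b P2 \<bullet> I3 = 1" "ellipse_normal a b P2 \<bullet> I1 = 1"
  "ellipse_normal a b P3 \<bullet> I1 = 1" "ellipse_normal a b P3 \<bullet> I2 = 1"
  using tangent_at_P1 billiard_orbit.tangent_at_P1[OF rotate] billiard_orbit.tangent_at_P1[OF rotate2]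
  by simp_all

lemma chord_relation_at_P1:
  "dist P1 P3 * (1 - ellipse_normal a b P1 \<bullet> P2) = dist P1 P2 * (1 - ellipse_normal a b P1 \<bullet> P3)"
  using bisector_chord_relation billiard not_collinear by (simp add: billiard3_def)

lemma symmedian_excentral_eq_0: "symmedian I1 I2 I3 = 0"
proof -
  note mid = cross2_pole_midpoint[OF ab_nonzero]
  have "mittenpunkt P1 P2 P3 = 0"
    using mittenpunkt_eq_0I[OF not_collinear] mid[OF on_ellipse(2,3) distinct(3) poles(4,5)]
      mid[OF on_ellipse(3,1) distinct(2)[symmetric] poles(6,1)] mid[OF on_ellipse(1,2) distinct(1) poles(2,3)]
    by blast
  then show ?thesis
    using symmedian_excentral[OF not_collinear] by simp
qed

lemma chord_defects:
  "1 - ellipse_normal a b P1 \<bullet> P2 = dist P1 P2 / billiard_radius a b"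
  "1 - ellipse_normal a b P1 \<bullet> P3 = dist P1 P3 / billiard_radius a b"
  "ellipse_normal a b (P1 + P2 + P3) \<bullet> (P1 + P2 + P3) < 1"
proof -
  define J where "J = (1 - ellipse_normal a b P1 \<bullet> P2) / dist P1 P2"
  have "dist P1 P2 > 0"
    using distinct by simp
  have c12: "1 - ellipse_normal a b P1 \<bullet> P2 = J * dist P1 P2"
    using \<open>dist P1 P2 > 0\<close> by (simp add: J_def)
  have c13: "1 - ellipse_normal a b P1 \<bullet> P3 = J * dist P1 P3"
    using chord_relation_at_P1 \<open>dist P1 P2 > 0\<close> by (simp add: J_def field_simps)
  have "dist P1 P2 * (1 - ellipse_normal a b P2 \<bullet> P3) = dist P2 P3 * (1 - ellipse_normal a b P1 \<bullet> P2)"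
    using billiard_orbit.chord_relation_at_P1[OF rotate]
    by (simp add: dist_commute inner_ellipse_normal_commute[of a b P2 P1])
  then have c23: "1 - ellipse_normal a b P2 \<bullet> P3 = J * dist P2 P3"
    using \<open>dist P1 P2 > 0\<close> by (simp add: J_def field_simps)
  note ratio = chord_ratio_eq_inverse_radius[OF b_pos b_less_a on_ellipse distinct c12 c13 c23]
  from ratio(1) radius_pos have "J = 1 / billiard_radius a b"
    by (simp add: field_simps)
  with c12 c13 show "1 - ellipse_normal a b P1 \<bullet> P2 = dist P1 P2 / billiard_radius a b"
    "1 - ellipse_normal a b P1 \<bullet> P3 = dist P1 P3 / billiard_radius a b"
    by simp_all
  show "ellipse_normal a b (P1 + P2 + P3) \<bullet> (P1 + P2 + P3) < 1"
    by (rule ratio(2))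
qed

lemma tangent_side_points_on_circle:
  assumes "X \<in> closed_segment I2 I3" and "d \<in> {P3 - P2, P1 - P3, P2 - P1}" and "X = t *\<^sub>R d"
  shows "norm X = billiard_radius a b"
proof -
  have X: "ellipse_normal a b P1 \<bullet> X = 1"
    using assms(1) tangent_closed_segment_iff[OF on_ellipse(1) poles(1,2)] by blast
  consider "d = P3 - P2" | "d = P2 - P1" | "d = P1 - P3"
    using assms(2) by blast
  then show ?thesis
  proof cases
    case 1
    with assms(1,3) show ?thesis
      using parallel_through_center_misses_tangent_side[OF ab_nonzero on_ellipse distinct(1,2) poles(2,3,1,6)]
      by simp
  next
    case 2
    with X assms(3) show ?thesis
      using norm_eq_if_on_tangent_parallel_chord[OF on_ellipse(1) _ chord_defects(1) radius_pos] by simp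
  next
    case 3
    have X': "X = (- t) *\<^sub>R (P3 - P1)"
      unfolding assms(3) 3 by (simp add: algebra_simps)
    show ?thesis
      unfolding X' using X[unfolded X'] chord_defects(2) radius_pos
      by (rule norm_eq_if_on_tangent_parallel_chord[OF on_ellipse(1)])
  qed
qed

lemma tangent_side_point_exists: "\<exists>X \<in> closed_segment I2 I3. \<exists>t. X = t *\<^sub>R (P2 - P1)"
proof -
  note acute = sum_inside_ellipse_imp_acute[OF ab_nonzero on_ellipse distinct chord_defects(3)]
  note opposite = opposite_sides_if_acute[OF ab_nonzero on_ellipse not_collinear acute(2,3)]
  show ?thesis
    using parallel_through_center_meets_tangent_side[OF ab_nonzero on_ellipse distinct(1,2)
        poles(2,3,1,6) acute(1) opposite] by blast
qed

lemma cosine_circle_points_excentral: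
  "cosine_circle_points I1 I2 I3 =
     {X \<in> closed_segment I1 I2 \<union> closed_segment I2 I3 \<union> closed_segment I3 I1.
        \<exists>d \<in> {P3 - P2, P1 - P3, P2 - P1}. \<exists>t. X = t *\<^sub>R d}"
  using orthic_excentral[OF not_collinear] symmedian_excentral_eq_0
  by (simp add: cosine_circle_points_def)

lemma cosine_circle_points_on_circle:
  assumes "X \<in> cosine_circle_points I1 I2 I3"
  shows "norm X = billiard_radius a b"
proof -
  obtain d t where X: "X \<in> closed_segment I1 I2 \<union> closed_segment I2 I3 \<union> closed_segment I3 I1"
    and d: "d \<in> {P3 - P2, P1 - P3, P2 - P1}" and t: "X = t *\<^sub>R d"
    using assms unfolding cosine_circle_points_excentral by blast
  have "{P1 - P3, P2 - P1, P3 - P2} = {P3 - P2, P1 - P3, P2 - P1}"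
    "{P2 - P1, P3 - P2, P1 - P3} = {P3 - P2, P1 - P3, P2 - P1}"
    by auto
  with X d t show ?thesis
    using tangent_side_points_on_circle billiard_orbit.tangent_side_points_on_circle[OF rotate]
      billiard_orbit.tangent_side_points_on_circle[OF rotate2]
    by (metis Un_iff)
qed

lemma excentral_cosine_circle:
  "case excentral P1 P2 P3 of (A, B, C) \<Rightarrow>
     symmedian A B C = (0, 0) \<and>
     cosine_circle_points A B C \<noteq> {} \<and>
     (\<forall>X \<in> cosine_circle_points A B C. norm X = billiard_radius a b)"
proof -
  have "cosine_circle_points I1 I2 I3 \<noteq> {}"
    using tangent_side_point_exists unfolding cosine_circle_points_excentral by blast
  then show ?thesis
    using symmedian_excentral_eq_0 cosine_circle_points_on_circle
    by (simp add: excentral_def zero_prod_def)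
qed

end

theorem theorem4:
  fixes a b :: real
  assumes "a > b" and "b > 0"
  shows "\<exists>r::real. r > a \<and>
           (\<forall>P1 P2 P3. billiard3 a b P1 P2 P3 \<longrightarrow>
              (case excentral P1 P2 P3 of (A, B, C) \<Rightarrow>
                 symmedian A B C = (0, 0) \<and>
                 cosine_circle_points A B C \<noteq> {} \<and>
                 (\<forall>X \<in> cosine_circle_points A B C. norm X = r)))"
proof (intro exI conjI allI impI)
  show "billiard_radius a b > a"
    using billiard_radius_gt assms by simp
  fix P1 P2 P3
  assume "billiard3 a b P1 P2 P3"
  then interpret billiard_orbit a b P1 P2 P3
    using assms by unfold_locales
  show "case excentral P1 P2 P3 of (A, B, C) \<Rightarrow>
      symmedian A B C = (0, 0) \<and> cosine_circle_points A B C \<noteq> {} \<and>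
      (\<forall>X \<in> cosine_circle_points A B C. norm X = billiard_radius a b)"
    by (rule excentral_cosine_circle)
qed

end
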